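(* Let $K$ be a number field. Given a finite set of closed points $\{\theta_i\}_{i\in I}$ of $\mathbb{A}^1_K$ with residue fields $K(\theta_i)$, and given for each $i\in I$ a Châtelet surface $\mathcal{S}_i$ defined over $K(\theta_i)$, there exists a Châtelet surface bundle over $\mathbb{A}^1$ defined over $K$ whose fiber at $\theta_i$ is isomorphic to $\mathcal{S}_i$ for every $i\in I$.
   Context: A Châtelet surface over a field $k$ (of characteristic $0$) is the smooth projective surface $\mathcal{S}$ associated with an affine surface $y^2-az^2=P(x)$ in $\mathbb{A}^3$, where $a\in k^*$ is a nonzero constant and $P(x)\in k[x]$ is a separable polynomial of degree $4$; the projective model is obtained by gluing the surface $Y^2-aZ^2=W^2P(x)$ in $(\mathbb{P}^1\setminus\{\infty\})\times\mathbb{P}^2$ with the surface $Y^2-aZ^2=W'^2P^*(x')$ in $(\mathbb{P}^1\setminus\{0\})\times\mathbb{P}^2$ via $x=1/x'$, $W=x'^2W'$, where $P^*(x')=x'^4P(1/x')$. A Châtelet surface bundle over $\mathbb{A}^1$ defined over $K$ is the family of such surfaces parameterised by $t$ given by $y^2-a_tz^2=P_t(x)$ (with the projective model in $\mathbb{A}^1\times\mathbb{P}^1\times\mathbb{P}^2$ obtained by replacing $a$ by $a_t$ and $P$ by $P_t$ in the gluing construction), where $a_t\in K[t]$ is nonzero and $P_t(x)\in K[t,x]$ has degree $4$ in $x$; its fiber at a closed point $\theta$ of $\mathbb{A}^1$ is the surface $y^2-a_\theta z^2=P_\theta(x)$ over the residue field $K(\theta)$. *)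

theory Defs
  imports "HOL-Computational_Algebra.Computational_Algebra"
begin

text \<open>Fields are modelled as subfields of the complex numbers.\<close>

definition subfield :: "complex set \<Rightarrow> bool" where
  "subfield F \<longleftrightarrow> 0 \<in> F \<and> 1 \<in> F \<and>
     (\<forall>x\<in>F. \<forall>y\<in>F. x + y \<in> F \<and> x - y \<in> F \<and> x * y \<in> F) \<and>
     (\<forall>x\<in>F. inverse x \<in> F)"

definition number_field :: "complex set \<Rightarrow> bool" where
  "number_field K \<longleftrightarrow> subfield K \<and>
     (\<exists>B. finite B \<and> B \<subseteq> K \<and>
        (\<forall>x\<in>K. \<exists>c :: complex \<Rightarrow> rat. x = (\<Sum>b\<in>B. of_rat (c b) * b)))"

definition adjoin :: "complex set \<Rightarrow> complex \<Rightarrow> complex set" where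
  "adjoin K \<alpha> = \<Inter>{F. subfield F \<and> K \<subseteq> F \<and> \<alpha> \<in> F}"

definition poly_over :: "complex set \<Rightarrow> complex poly \<Rightarrow> bool" where
  "poly_over L p \<longleftrightarrow> (\<forall>i. coeff p i \<in> L)"

text \<open>Monic irreducible polynomials over K = closed points of the affine line over K.\<close>
definition closed_point :: "complex set \<Rightarrow> complex poly \<Rightarrow> bool" where
  "closed_point K f \<longleftrightarrow> poly_over K f \<and> lead_coeff f = 1 \<and> degree f \<ge> 1 \<and>
     (\<forall>g h. poly_over K g \<and> poly_over K h \<and> f = g * h \<longrightarrow> degree g = 0 \<or> degree h = 0)"

text \<open>Defining data (a, P) of a Chatelet surface y^2 - a z^2 = P(x) over the field L.\<close>
definition chatelet_data :: "complex set \<Rightarrow> complex \<Rightarrow> complex poly \<Rightarrow> bool" where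
  "chatelet_data L a P \<longleftrightarrow> a \<in> L \<and> a \<noteq> 0 \<and> poly_over L P \<and> degree P = 4 \<and> rsquarefree P"

text \<open>Defining data (a_t, P_t) of a Chatelet surface bundle over the affine line over K:
  a_t in K[t] nonzero, P_t in K[t][x] of degree 4 in x.\<close>
definition chatelet_bundle_data :: "complex set \<Rightarrow> complex poly \<Rightarrow> complex poly poly \<Rightarrow> bool" where
  "chatelet_bundle_data K a_t P_t \<longleftrightarrow> poly_over K a_t \<and> a_t \<noteq> 0 \<and>
     (\<forall>i. poly_over K (coeff P_t i)) \<and> degree P_t = 4"

text \<open>Fiber at the closed point with chosen root alpha (residue field K(alpha)).\<close>
definition fiber_a :: "complex poly \<Rightarrow> complex \<Rightarrow> complex" where
  "fiber_a a_t \<alpha> = poly a_t \<alpha>"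

definition fiber_P :: "complex poly poly \<Rightarrow> complex \<Rightarrow> complex poly" where
  "fiber_P P_t \<alpha> = map_poly (\<lambda>c. poly c \<alpha>) P_t"

end

theory Submission imports Defs begin

text \<open>
  A closed point \<theta> of the affine line is a monic irreducible f over K, and its residue field
  K(\<alpha>) at a root \<alpha> of f consists of the values g(\<alpha>) of polynomials g over K: by division
  with remainder and irreducibility, every g with g(\<alpha>) \<noteq> 0 has a Bezout inverse modulo f.
  Distinct closed points share no root, so the products of the other f j, corrected by such
  inverses, form a Lagrange basis, and any prescribed values in the residue fields K(\<alpha> i) are
  taken by a single polynomial over K (Chinese remainder theorem). Interpolating a i and each
  coefficient of P i in this way gives a_t and the coefficients of P_t; choosing the interpolants
  nonzero ensures a_t \<noteq> 0 and that P_t has degree 4 in x.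
\<close>

lemma monic_poly_dvd_antisym:
  fixes p q :: "'a::idom poly"
  assumes "lead_coeff p = 1" "lead_coeff q = 1" "p dvd q" "q dvd p"
  shows "p = q"
proof -
  obtain r where r: "q = p * r" using \<open>p dvd q\<close> by (rule dvdE)
  have "p \<noteq> 0" "q \<noteq> 0" using assms(1,2) by auto
  then have "degree p = degree q"
    using assms(3,4) by (simp add: dvd_imp_degree_le antisym)
  with r \<open>q \<noteq> 0\<close> have "degree r = 0"
    by (auto simp: degree_mult_eq)
  moreover have "lead_coeff r = 1"
    using r assms(1,2) by (simp add: lead_coeff_mult)
  ultimately have "r = 1"
    by (metis degree_eq_zeroE lead_coeff_pCons(2) one_pCons)
  with r show ?thesis by simp
qed

context
  fixes K :: "complex set"
  assumes K: "subfield K"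
begin

lemma subfield_0: "0 \<in> K" and subfield_1: "1 \<in> K"
  and subfield_add: "x \<in> K \<Longrightarrow> y \<in> K \<Longrightarrow> x + y \<in> K"
  and subfield_diff: "x \<in> K \<Longrightarrow> y \<in> K \<Longrightarrow> x - y \<in> K"
  and subfield_mult: "x \<in> K \<Longrightarrow> y \<in> K \<Longrightarrow> x * y \<in> K"
  and subfield_inverse: "x \<in> K \<Longrightarrow> inverse x \<in> K"
  using K by (auto simp: subfield_def)

lemma subfield_divide: "x \<in> K \<Longrightarrow> y \<in> K \<Longrightarrow> x / y \<in> K"
  by (simp add: divide_inverse subfield_mult subfield_inverse)

lemma subfield_sum: "(\<And>x. x \<in> A \<Longrightarrow> h x \<in> K) \<Longrightarrow> sum h A \<in> K"
  by (induction A rule: infinite_finite_induct) (auto intro: subfield_0 subfield_add)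

lemma poly_over_0: "poly_over K 0"
  by (simp add: poly_over_def subfield_0)

lemma poly_over_pCons_iff: "poly_over K (pCons c p) \<longleftrightarrow> c \<in> K \<and> poly_over K p"
  by (auto simp: poly_over_def coeff_pCons split: nat.splits)

lemma poly_over_1: "poly_over K 1"
  by (simp add: one_pCons poly_over_pCons_iff poly_over_0 subfield_1)

lemma poly_over_add: "poly_over K p \<Longrightarrow> poly_over K q \<Longrightarrow> poly_over K (p + q)"
  by (simp add: poly_over_def subfield_add)

lemma poly_over_diff: "poly_over K p \<Longrightarrow> poly_over K q \<Longrightarrow> poly_over K (p - q)"
  by (simp add: poly_over_def subfield_diff)

lemma poly_over_mult: "poly_over K p \<Longrightarrow> poly_over K q \<Longrightarrow> poly_over K (p * q)"
  unfolding poly_over_def coeff_mult by (auto intro!: subfield_sum subfield_mult)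

lemma poly_over_smult: "c \<in> K \<Longrightarrow> poly_over K q \<Longrightarrow> poly_over K (smult c q)"
  by (simp add: poly_over_def subfield_mult)

lemma poly_over_monom: "c \<in> K \<Longrightarrow> poly_over K (monom c n)"
  by (simp add: poly_over_def coeff_monom subfield_0)

lemma poly_over_sum: "(\<And>x. x \<in> A \<Longrightarrow> poly_over K (h x)) \<Longrightarrow> poly_over K (sum h A)"
  by (induction A rule: infinite_finite_induct) (auto intro: poly_over_0 poly_over_add)

lemma poly_over_prod: "(\<And>x. x \<in> A \<Longrightarrow> poly_over K (h x)) \<Longrightarrow> poly_over K (prod h A)"
  by (induction A rule: infinite_finite_induct) (auto intro: poly_over_1 poly_over_mult)

lemma poly_over_lead_coeff: "poly_over K p \<Longrightarrow> lead_coeff p \<in> K"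
  by (simp add: poly_over_def)

lemma poly_over_divmod:
  assumes "poly_over K d" "d \<noteq> 0" "poly_over K p"
  shows "\<exists>q r. poly_over K q \<and> poly_over K r \<and> p = q * d + r \<and> (r = 0 \<or> degree r < degree d)"
  using assms(3)
proof (induction "degree p" arbitrary: p rule: less_induct)
  case less
  show ?case
  proof (cases "p = 0 \<or> degree p < degree d")
    case True
    then show ?thesis using less.prems poly_over_0 by (intro exI[of _ 0] exI[of _ p]) auto
  next
    case False
    define m where "m = monom (lead_coeff p / lead_coeff d) (degree p - degree d)"
    have m: "poly_over K m"
      unfolding m_def using assms less.prems
      by (intro poly_over_monom subfield_divide poly_over_lead_coeff)
    have deg: "degree (m * d) = degree p"
      using False \<open>d \<noteq> 0\<close> by (simp add: m_def degree_mult_eq degree_monom_eq)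
    have "lead_coeff (m * d) = lead_coeff p"
      using False \<open>d \<noteq> 0\<close> unfolding lead_coeff_mult by (simp add: m_def degree_monom_eq)
    with deg have "p - m * d = 0 \<or> degree (p - m * d) < degree p"
      by (metis (no_types, lifting) degree_diff_le diff_self le_neq_implies_less
          leading_coeff_0_iff coeff_diff order_refl)
    moreover have "poly_over K (p - m * d)"
      using assms less.prems m by (intro poly_over_diff poly_over_mult)
    ultimately obtain q r where "poly_over K q" "poly_over K r" "p - m * d = q * d + r"
        "r = 0 \<or> degree r < degree d"
      using less.hyps[of "p - m * d"] poly_over_0 by (metis add_0 mult_zero_left)
    then show ?thesis
      using m by (intro exI[of _ "q + m"] exI[of _ r]) (auto simp: poly_over_add algebra_simps)
  qed
qed

lemma poly_over_ideal_generator: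
  assumes f: "poly_over K f" "f \<noteq> 0" and g: "poly_over K g"
  obtains d u v where "d \<noteq> 0" "poly_over K d" "poly_over K u" "poly_over K v" "d = u * f + v * g"
    and "\<And>u' v'. poly_over K u' \<Longrightarrow> poly_over K v' \<Longrightarrow>
           \<exists>q. poly_over K q \<and> u' * f + v' * g = q * d"
proof -
  define D where "D = {u * f + v * g | u v. poly_over K u \<and> poly_over K v} - {0}"
  have "f \<in> D"
    unfolding D_def using f poly_over_0 poly_over_1 by force
  then obtain d where "d \<in> D" and d_min: "\<And>d'. d' \<in> D \<Longrightarrow> degree d \<le> degree d'"
    using ex_has_least_nat[of "\<lambda>d. d \<in> D" f degree] by blast
  then obtain u v where d: "d \<noteq> 0" "poly_over K u" "poly_over K v" "d = u * f + v * g"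
    unfolding D_def by blast
  have d_over: "poly_over K d"
    using d f g by (simp add: poly_over_add poly_over_mult)
  have "\<exists>q. poly_over K q \<and> u' * f + v' * g = q * d"
    if u'v': "poly_over K u'" "poly_over K v'" for u' v'
  proof -
    have "poly_over K (u' * f + v' * g)"
      using u'v' f g by (simp add: poly_over_add poly_over_mult)
    then obtain q r where qr: "poly_over K q" "poly_over K r" "u' * f + v' * g = q * d + r"
        "r = 0 \<or> degree r < degree d"
      using poly_over_divmod[OF d_over \<open>d \<noteq> 0\<close>] by blast
    \<comment> \<open>the remainder lies in the ideal again, so minimality of d forces it to vanish\<close>
    have "r = (u' - q * u) * f + (v' - q * v) * g"
      using qr(3) d(4) by (simp add: algebra_simps)
    moreover have "poly_over K (u' - q * u)" "poly_over K (v' - q * v)"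
      using u'v' d qr(1) by (simp_all add: poly_over_diff poly_over_mult)
    ultimately have "r \<noteq> 0 \<Longrightarrow> r \<in> D"
      unfolding D_def by blast
    with qr(4) d_min have "r = 0"
      by (metis not_le)
    with qr show ?thesis by auto
  qed
  with d d_over that show ?thesis by blast
qed

lemma closed_point_dvd_or_coprime:
  assumes f: "closed_point K f" and g: "poly_over K g"
  shows "f dvd g \<or> (\<exists>u v. poly_over K u \<and> poly_over K v \<and> u * f + v * g = 1)"
proof -
  have f_over: "poly_over K f" and "f \<noteq> 0"
    using f by (auto simp: closed_point_def)
  obtain d u v where d: "d \<noteq> 0" "poly_over K d" "poly_over K u" "poly_over K v" "d = u * f + v * g"
    and ideal: "\<And>u' v'. poly_over K u' \<Longrightarrow> poly_over K v' \<Longrightarrow>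
           \<exists>q. poly_over K q \<and> u' * f + v' * g = q * d"
    using poly_over_ideal_generator[OF f_over \<open>f \<noteq> 0\<close> g] by blast
  obtain q where q: "poly_over K q" "f = q * d"
    using ideal[OF poly_over_1 poly_over_0] by auto
  with f d(2) have "degree q = 0 \<or> degree d = 0"
    unfolding closed_point_def by (metis (no_types))
  then show ?thesis
  proof
    assume "degree q = 0"
    then obtain c where "q = [:c:]" by (rule degree_eq_zeroE)
    with q(2) \<open>f \<noteq> 0\<close> have "d = smult (inverse c) f"
      by auto
    then have "f dvd d" by (simp add: dvd_smult)
    moreover have "d dvd g"
      using ideal[OF poly_over_0 poly_over_1] by auto
    ultimately show ?thesis by (blast intro: dvd_trans)
  next
    assume "degree d = 0"
    then obtain c where c: "d = [:c:]" by (rule degree_eq_zeroE)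
    with d(1,2) have "c \<noteq> 0" "c \<in> K"
      by (auto simp: poly_over_pCons_iff)
    moreover have "smult (inverse c) u * f + smult (inverse c) v * g = 1"
      using c \<open>c \<noteq> 0\<close> d(5)[symmetric] by (simp add: smult_add_right[symmetric] one_pCons)
    ultimately show ?thesis
      using d(3,4) poly_over_smult subfield_inverse by blast
  qed
qed

lemma closed_point_dvd_of_root:
  assumes "closed_point K f" "poly f \<alpha> = 0" "poly_over K g" "poly g \<alpha> = 0"
  shows "f dvd g"
proof -
  have "u * f + v * g \<noteq> 1" for u v
    using assms(2,4) by (metis poly_1 poly_add poly_mult mult_zero_right add_0 zero_neq_one)
  then show ?thesis
    using closed_point_dvd_or_coprime[OF assms(1,3)] by blast
qed

lemma closed_point_inverse_at_root:
  assumes "closed_point K f" "poly f \<alpha> = 0" "poly_over K g" "poly g \<alpha> \<noteq> 0"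
  shows "\<exists>v. poly_over K v \<and> poly v \<alpha> * poly g \<alpha> = 1"
proof -
  have "\<not> f dvd g"
    using assms(2,4) by (auto elim: dvdE)
  then obtain u v where "poly_over K v" "u * f + v * g = 1"
    using closed_point_dvd_or_coprime[OF assms(1,3)] by blast
  moreover from this(2) have "poly v \<alpha> * poly g \<alpha> = 1"
    using assms(2) by (metis add_0 mult_zero_right poly_1 poly_add poly_mult)
  ultimately show ?thesis by blast
qed

lemma closed_point_eqI:
  assumes "closed_point K f1" "closed_point K f2" "poly f1 \<alpha> = 0" "poly f2 \<alpha> = 0"
  shows "f1 = f2"
  using assms closed_point_dvd_of_root
  by (intro monic_poly_dvd_antisym) (auto simp: closed_point_def)

lemma subfield_poly_values_at_root:
  assumes "closed_point K f" "poly f \<alpha> = 0"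
  shows "subfield {poly g \<alpha> | g. poly_over K g}" (is "subfield ?S")
  unfolding subfield_def
proof (intro conjI ballI)
  show "0 \<in> ?S" "1 \<in> ?S"
    using poly_over_0 poly_over_1 by force+
next
  fix x y assume "x \<in> ?S" "y \<in> ?S"
  then obtain g h where "poly_over K g" "poly_over K h" "x = poly g \<alpha>" "y = poly h \<alpha>"
    by blast
  moreover from this have "poly_over K (g + h)" "poly_over K (g - h)" "poly_over K (g * h)"
    by (simp_all add: poly_over_add poly_over_diff poly_over_mult)
  ultimately show "x + y \<in> ?S" "x - y \<in> ?S" "x * y \<in> ?S"
    by (metis (mono_tags, lifting) mem_Collect_eq poly_add poly_diff poly_mult)+
next
  fix x assume "x \<in> ?S"
  then obtain g where g: "poly_over K g" "x = poly g \<alpha>"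
    by blast
  show "inverse x \<in> ?S"
  proof (cases "x = 0")
    case True
    then show ?thesis using poly_over_0 by force
  next
    case False
    with g(2) have "poly g \<alpha> \<noteq> 0" by simp
    then obtain v where v: "poly_over K v" "poly v \<alpha> * poly g \<alpha> = 1"
      using closed_point_inverse_at_root[OF assms g(1)] by blast
    have "inverse x = poly v \<alpha>"
      unfolding g(2) by (rule inverse_unique) (use v(2) in \<open>simp only: mult.commute\<close>)
    with v(1) show ?thesis by blast
  qed
qed

lemma adjoin_closed_point_root:
  assumes "closed_point K f" "poly f \<alpha> = 0"
  shows "adjoin K \<alpha> \<subseteq> {poly g \<alpha> | g. poly_over K g}" (is "_ \<subseteq> ?S")
proof -
  have "subfield ?S"
    using assms by (rule subfield_poly_values_at_root)
  moreover have "K \<subseteq> ?S"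
  proof
    fix c assume "c \<in> K"
    then have "poly_over K [:c:] \<and> c = poly [:c:] \<alpha>"
      by (simp add: poly_over_pCons_iff poly_over_0)
    then show "c \<in> ?S" by blast
  qed
  moreover have "poly_over K [:0, 1:] \<and> \<alpha> = poly [:0, 1:] \<alpha>"
    by (simp add: poly_over_pCons_iff poly_over_0 subfield_0 subfield_1)
  then have "\<alpha> \<in> ?S" by blast
  ultimately show ?thesis
    unfolding adjoin_def by (intro Inter_lower) blast
qed

context
  fixes I :: "'i set" and f :: "'i \<Rightarrow> complex poly" and \<alpha> :: "'i \<Rightarrow> complex"
  assumes finite_I: "finite I"
    and closed_points: "\<And>i. i \<in> I \<Longrightarrow> closed_point K (f i)"
    and inj_f: "inj_on f I"
    and roots: "\<And>i. i \<in> I \<Longrightarrow> poly (f i) (\<alpha> i) = 0"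
begin

lemma lagrange_basis_closed_points:
  assumes "i \<in> I"
  shows "\<exists>e. poly_over K e \<and> poly e (\<alpha> i) = 1 \<and> (\<forall>j\<in>I - {i}. poly e (\<alpha> j) = 0)"
proof -
  define E where "E = (\<Prod>j\<in>I - {i}. f j)"
  have E_over: "poly_over K E"
    unfolding E_def using closed_points by (intro poly_over_prod) (simp add: closed_point_def)
  \<comment> \<open>distinct closed points have no common root\<close>
  have "poly (f j) (\<alpha> i) \<noteq> 0" if "j \<in> I - {i}" for j
  proof
    assume "poly (f j) (\<alpha> i) = 0"
    with that assms have "f j = f i"
      by (intro closed_point_eqI[OF closed_points closed_points _ roots]) auto
    with inj_f assms that show False
      by (auto dest: inj_onD)
  qed
  then have "poly E (\<alpha> i) \<noteq> 0"
    unfolding E_def poly_prod using finite_I by (simp add: prod_zero_iff)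
  then obtain v where v: "poly_over K v" "poly v (\<alpha> i) * poly E (\<alpha> i) = 1"
    using closed_point_inverse_at_root[OF closed_points roots E_over] assms by blast
  moreover have "poly E (\<alpha> j) = 0" if "j \<in> I - {i}" for j
    unfolding E_def poly_prod using finite_I that roots by (auto simp: prod_zero_iff)
  moreover have "poly_over K (v * E)"
    using v(1) E_over by (rule poly_over_mult)
  ultimately show ?thesis
    by (intro exI[of _ "v * E"]) auto
qed

lemma interpolation_at_closed_points:
  assumes "\<And>i. i \<in> I \<Longrightarrow> b i \<in> adjoin K (\<alpha> i)"
  shows "\<exists>h. poly_over K h \<and> h \<noteq> 0 \<and> (\<forall>i\<in>I. poly h (\<alpha> i) = b i)"
proof -
  have "\<exists>g. poly_over K g \<and> poly g (\<alpha> i) = b i" if "i \<in> I" for i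
  proof -
    have "b i \<in> {poly g (\<alpha> i) | g. poly_over K g}"
      using adjoin_closed_point_root[OF closed_points[OF that] roots[OF that]] assms[OF that] ..
    then show ?thesis by auto
  qed
  then obtain g where g: "\<And>i. i \<in> I \<Longrightarrow> poly_over K (g i) \<and> poly (g i) (\<alpha> i) = b i"
    by metis
  obtain e where e: "\<And>i. i \<in> I \<Longrightarrow> poly_over K (e i) \<and> poly (e i) (\<alpha> i) = 1 \<and>
      (\<forall>j\<in>I - {i}. poly (e i) (\<alpha> j) = 0)"
    using lagrange_basis_closed_points by metis
  define h where "h = (\<Sum>i\<in>I. g i * e i)"
  have h_over: "poly_over K h"
    unfolding h_def using g e by (intro poly_over_sum poly_over_mult) auto
  have h_values: "poly h (\<alpha> j) = b j" if "j \<in> I" for j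
  proof -
    have "poly h (\<alpha> j) = (\<Sum>i\<in>I. poly (g i) (\<alpha> j) * poly (e i) (\<alpha> j))"
      by (simp add: h_def poly_sum)
    also have "\<dots> = poly (g j) (\<alpha> j) * poly (e j) (\<alpha> j)
        + (\<Sum>i\<in>I - {j}. poly (g i) (\<alpha> j) * poly (e i) (\<alpha> j))"
      by (rule sum.remove[OF finite_I that])
    also have "(\<Sum>i\<in>I - {j}. poly (g i) (\<alpha> j) * poly (e i) (\<alpha> j)) = 0"
      using e that by (intro sum.neutral) auto
    also have "poly (g j) (\<alpha> j) * poly (e j) (\<alpha> j) = b j"
      using g[OF that] e[OF that] by simp
    finally show ?thesis by simp
  qed
  show ?thesis
  proof (cases "h = 0")
    case False
    with h_over h_values show ?thesis by blast
  next
    \<comment> \<open>then every b i vanishes, and the nonzero product of the f i interpolates them as well\<close>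
    case True
    define F where "F = (\<Prod>i\<in>I. f i)"
    have "poly_over K F"
      unfolding F_def using closed_points by (intro poly_over_prod) (simp add: closed_point_def)
    moreover have "f i \<noteq> 0" if "i \<in> I" for i
      using closed_points[OF that] by (auto simp: closed_point_def)
    then have "F \<noteq> 0"
      unfolding F_def using finite_I by (simp add: prod_zero_iff)
    moreover have "poly F (\<alpha> j) = b j" if "j \<in> I" for j
    proof -
      have "poly F (\<alpha> j) = 0"
        unfolding F_def poly_prod using finite_I that roots by (auto simp: prod_zero_iff)
      with h_values[OF that] True show ?thesis by simp
    qed
    ultimately show ?thesis by blast
  qed
qed

end

end

lemma coeff_sum_monom: "coeff (\<Sum>k\<le>n. monom (c k) k) m = (if m \<le> n then c m else 0)"
  by (simp add: coeff_sum coeff_monom)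

lemma degree_sum_monom:
  assumes "c n \<noteq> 0"
  shows "degree (\<Sum>k\<le>n. monom (c k) k) = n"
proof (rule antisym)
  show "degree (\<Sum>k\<le>n. monom (c k) k) \<le> n"
    by (rule degree_le) (simp add: coeff_sum_monom)
  show "n \<le> degree (\<Sum>k\<le>n. monom (c k) k)"
    by (rule le_degree) (simp add: coeff_sum_monom assms)
qed

lemma fiber_P_sum_monom:
  assumes "degree p \<le> n" "\<And>k. k \<le> n \<Longrightarrow> poly (c k) \<alpha> = coeff p k"
  shows "fiber_P (\<Sum>k\<le>n. monom (c k) k) \<alpha> = p"
proof (rule poly_eqI)
  fix m
  show "coeff (fiber_P (\<Sum>k\<le>n. monom (c k) k) \<alpha>) m = coeff p m"
    using assms by (simp add: fiber_P_def coeff_map_poly coeff_sum_monom coeff_eq_0)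
qed

theorem proposition3p3:
  fixes K :: "complex set" and I :: "'i set"
    and f :: "'i \<Rightarrow> complex poly" and \<alpha> :: "'i \<Rightarrow> complex"
    and a :: "'i \<Rightarrow> complex" and P :: "'i \<Rightarrow> complex poly"
  assumes "number_field K"
    and "finite I"
    and "\<And>i. i \<in> I \<Longrightarrow> closed_point K (f i)"
    and "inj_on f I"
    and "\<And>i. i \<in> I \<Longrightarrow> poly (f i) (\<alpha> i) = 0"
    and "\<And>i. i \<in> I \<Longrightarrow> chatelet_data (adjoin K (\<alpha> i)) (a i) (P i)"
  shows "\<exists>a_t P_t. chatelet_bundle_data K a_t P_t \<and>
           (\<forall>i\<in>I. fiber_a a_t (\<alpha> i) = a i \<and> fiber_P P_t (\<alpha> i) = P i)"
proof -
  have K: "subfield K"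
    using assms(1) by (simp add: number_field_def)
  have data: "a i \<in> adjoin K (\<alpha> i)" "\<forall>k. coeff (P i) k \<in> adjoin K (\<alpha> i)" "degree (P i) = 4"
    if "i \<in> I" for i
    using assms(6)[OF that] by (simp_all add: chatelet_data_def poly_over_def)
  have interpolation: "\<exists>h. poly_over K h \<and> h \<noteq> 0 \<and> (\<forall>i\<in>I. poly h (\<alpha> i) = b i)"
    if "\<And>i. i \<in> I \<Longrightarrow> b i \<in> adjoin K (\<alpha> i)" for b
    using interpolation_at_closed_points[of K I f \<alpha> b] K assms(2-5) that by blast
  obtain A where A: "poly_over K A" "A \<noteq> 0" "\<forall>i\<in>I. poly A (\<alpha> i) = a i"
    using interpolation[of a] data(1) by blast
  have "\<exists>h. poly_over K h \<and> h \<noteq> 0 \<and> (\<forall>i\<in>I. poly h (\<alpha> i) = coeff (P i) k)" for k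
    using data(2) by (intro interpolation) blast
  then obtain H where H: "\<And>k. poly_over K (H k) \<and> H k \<noteq> 0 \<and>
      (\<forall>i\<in>I. poly (H k) (\<alpha> i) = coeff (P i) k)"
    by metis
  define P_t where "P_t = (\<Sum>k\<le>4. monom (H k) k)"
  have "chatelet_bundle_data K A P_t"
    using A H poly_over_0[OF K]
    by (simp add: chatelet_bundle_data_def P_t_def coeff_sum_monom degree_sum_monom)
  moreover have "fiber_P P_t (\<alpha> i) = P i" if "i \<in> I" for i
    unfolding P_t_def using H data(3) that by (intro fiber_P_sum_monom) auto
  ultimately show ?thesis
    using A(3) by (auto simp: fiber_a_def)
qed

end
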